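(* Let $W \in \mathbb{R}^{m \times n}$ have a directed spanning set of $\mathbb{R}^n$ with respect to every $x \in \mathbb{R}^n$. Then there exists $C(W) > 0$ such that for all $x_0, x_1 \in \mathbb{R}^n$, $$\|\operatorname{ReLU}(Wx_0) - \operatorname{ReLU}(Wx_1)\|_2 \geq C(W)\, \|x_0 - x_1\|_2,$$ where one may take $C(W) = \frac{1}{\sqrt{2m}} \min_{x \in \mathbb{R}^n} \sigma\big(W|_{S(x,W)}\big)$.
   Context: $\operatorname{ReLU}(y)=\max(y,0)$ componentwise. For $W$ with rows $w_1,\dots,w_m$ and $x\in\mathbb{R}^n$, $S(x,W) = \{ j \in \{1,\dots,m\} : \langle w_j, x\rangle \geq 0\}$; for an index set $\mathcal{I}$, $W|_{\mathcal{I}}$ is the $m\times n$ matrix whose $j$-th row equals $w_j$ if $j\in\mathcal{I}$ and is zero otherwise. $\sigma(M)$ denotes the smallest singular value of $M$ (i.e. $\min_{\|x\|_2=1}\|Mx\|_2$). $W$ has a directed spanning set of $\mathbb{R}^n$ w.r.t. $x$ if the rows $\{w_j : j \in S(x,W)\}$ span $\mathbb{R}^n$. *)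

theory Defs
  imports "HOL-Analysis.Analysis"
begin

definition relu :: "real ^ 'm \<Rightarrow> real ^ 'm" where
  "relu y = (\<chi> j. max (y $ j) 0)"

definition active_set :: "real ^ 'n \<Rightarrow> real ^ 'n ^ 'm \<Rightarrow> 'm set" where
  "active_set x W = {j. W $ j \<bullet> x \<ge> 0}"

definition restrict_rows :: "real ^ 'n ^ 'm \<Rightarrow> 'm set \<Rightarrow> real ^ 'n ^ 'm" where
  "restrict_rows W I = (\<chi> j. if j \<in> I then W $ j else 0)"

definition smallest_sv :: "real ^ 'n ^ 'm \<Rightarrow> real" where
  "smallest_sv M = Inf {norm (M *v x) | x. norm x = 1}"

definition directed_spanning :: "real ^ 'n ^ 'm \<Rightarrow> real ^ 'n \<Rightarrow> bool" where
  "directed_spanning W x \<longleftrightarrow> span {W $ j | j. j \<in> active_set x W} = UNIV"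

end

theory Submission
  imports Defs
begin

text \<open>Let \<open>S\<close> be the active set at the midpoint of \<open>x\<^sub>0\<close> and \<open>x\<^sub>1\<close>. For \<open>j \<in> S\<close> the
  two pre-activations \<open>a = \<langle>w\<^sub>j, x\<^sub>0\<rangle>\<close>, \<open>b = \<langle>w\<^sub>j, x\<^sub>1\<rangle>\<close> satisfy \<open>a + b \<ge> 0\<close>, and then
  \<open>|ReLU a - ReLU b| \<ge> |a - b| / 2\<close>. Hence the ReLU difference dominates half of
  \<open>W|\<^sub>S (x\<^sub>0 - x\<^sub>1)\<close> componentwise, and its norm is at least
  \<open>\<sigma>(W|\<^sub>S) \<parallel>x\<^sub>0 - x\<^sub>1\<parallel> / 2\<close>. There are only finitely many active sets, each spanning,
  so the minimum of these singular values is attained and positive. Finally a spanning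
  active set at \<open>-w\<^sub>j\<close> must contain a row other than \<open>w\<^sub>j\<close>, so \<open>m \<ge> 2\<close> and
  \<open>1/\<surd>(2m) \<le> 1/2\<close>.\<close>

lemma smallest_sv_mult_norm_le:
  fixes M :: "real ^ 'n ^ 'm"
  shows "smallest_sv M * norm d \<le> norm (M *v d)"
proof (cases "d = 0")
  case False
  define u where "u = (1 / norm d) *\<^sub>R d"
  have "norm u = 1" using False by (simp add: u_def)
  moreover have "bdd_below {norm (M *v x) | x. norm x = 1}"
    by (rule bdd_belowI[of _ 0]) auto
  ultimately have "smallest_sv M \<le> norm (M *v u)"
    unfolding smallest_sv_def by (intro cInf_lower) auto
  also have "M *v u = (1 / norm d) *\<^sub>R (M *v d)"
    by (simp add: u_def matrix_vector_mult_scaleR)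
  finally have "smallest_sv M \<le> norm (M *v d) / norm d" using False by simp
  then show ?thesis using False by (simp add: pos_le_divide_eq)
qed simp

lemma smallest_sv_pos_if_span_rows:
  fixes M :: "real ^ 'n ^ 'm"
  assumes "span (rows M) = UNIV"
  shows "smallest_sv M > 0"
proof -
  have lin: "linear ((*v) M)" by simp
  have "inj ((*v) M)"
    using assms nullspace_inter_rowspace[of M] by (simp add: linear_inj_iff_eq_0[OF lin])
  then obtain B where "B > 0" and B: "\<And>x. B * norm x \<le> norm (M *v x)"
    using linear_inj_bounded_below_pos[OF lin] by blast
  have "B \<le> smallest_sv M"
    unfolding smallest_sv_def
  proof (rule cInf_greatest)
    show "{norm (M *v x) | x. norm x = 1} \<noteq> {}"
      using norm_axis_1 by blast
  next
    fix y assume "y \<in> {norm (M *v x) | x. norm x = 1}"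
    then obtain x where "norm x = 1" "y = norm (M *v x)" by blast
    then show "B \<le> y" using B[of x] by simp
  qed
  with \<open>B > 0\<close> show ?thesis by simp
qed

lemma span_rows_restrict_rows:
  fixes W :: "real ^ 'n ^ 'm"
  assumes "span {W $ j | j. j \<in> S} = UNIV"
  shows "span (rows (restrict_rows W S)) = UNIV"
proof -
  have "{W $ j | j. j \<in> S} \<subseteq> rows (restrict_rows W S)"
    by (auto simp: rows_def row_def restrict_rows_def vec_lambda_eta)
  then show ?thesis using assms span_mono by blast
qed

lemma directed_spanning_smallest_sv_pos:
  assumes "directed_spanning W x"
  shows "smallest_sv (restrict_rows W (active_set x W)) > 0"
  using assms
  by (intro smallest_sv_pos_if_span_rows span_rows_restrict_rows) (simp add: directed_spanning_def)

lemma directed_spanning_at_neg_row: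
  fixes W :: "real ^ 'n ^ 'm"
  assumes "directed_spanning W (- W $ j)"
  shows "\<exists>k. k \<noteq> j"
proof -
  let ?A = "{W $ k | k. k \<in> active_set (- W $ j) W}"
  have "\<not> ?A \<subseteq> {0}"
  proof
    assume "?A \<subseteq> {0}"
    then have "span ?A \<subseteq> {0}"
      using span_mono[of ?A "{0}"] by simp
    moreover have "(axis undefined 1 :: real ^ 'n) \<in> span ?A"
      using assms by (simp add: directed_spanning_def)
    ultimately have "(axis undefined 1 :: real ^ 'n) = 0" by blast
    then show False by (simp add: axis_eq_0_iff)
  qed
  then obtain k where k: "W $ k \<bullet> (- W $ j) \<ge> 0" and "W $ k \<noteq> 0"
    by (auto simp: active_set_def)
  have "k \<noteq> j"
  proof
    assume "k = j"
    with k have "W $ k \<bullet> W $ k \<le> 0" by simp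
    with \<open>W $ k \<noteq> 0\<close> show False using inner_gt_zero_iff[of "W $ k"] by linarith
  qed
  then show ?thesis ..
qed

lemma directed_spanning_card_ge_2:
  fixes W :: "real ^ 'n ^ 'm"
  assumes "\<forall>x. directed_spanning W x"
  shows "CARD('m) \<ge> 2"
proof -
  obtain j k :: 'm where "k \<noteq> j"
    using directed_spanning_at_neg_row assms by blast
  then have "card {j, k} \<le> CARD('m)" by (intro card_mono) auto
  with \<open>k \<noteq> j\<close> show ?thesis by simp
qed

lemma abs_diff_half_le_relu_diff:
  fixes a b :: real
  assumes "a + b \<ge> 0"
  shows "\<bar>a - b\<bar> / 2 \<le> \<bar>max a 0 - max b 0\<bar>"
  using assms by (auto simp: max_def abs_if)

lemma relu_diff_ge_midpoint_restriction:
  fixes W :: "real ^ 'n ^ 'm" and x0 x1 :: "real ^ 'n"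
  defines "S \<equiv> active_set ((1/2) *\<^sub>R (x0 + x1)) W"
  shows "norm (restrict_rows W S *v (x0 - x1)) / 2 \<le> norm (relu (W *v x0) - relu (W *v x1))"
proof -
  have "\<bar>((1/2) *\<^sub>R (restrict_rows W S *v (x0 - x1))) $ j\<bar>
        \<le> \<bar>(relu (W *v x0) - relu (W *v x1)) $ j\<bar>" for j
  proof (cases "j \<in> S")
    case True
    then have "W $ j \<bullet> x0 + W $ j \<bullet> x1 \<ge> 0"
      by (simp add: S_def active_set_def inner_add_right)
    from abs_diff_half_le_relu_diff[OF this] True show ?thesis
      by (simp add: matrix_vector_mul_component restrict_rows_def relu_def inner_diff_right)
  qed (simp add: matrix_vector_mul_component restrict_rows_def)
  then have "norm ((1/2) *\<^sub>R (restrict_rows W S *v (x0 - x1)))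
             \<le> norm (relu (W *v x0) - relu (W *v x1))"
    by (intro norm_le_componentwise_cart) simp
  then show ?thesis by simp
qed

lemma relu_diff_ge_smallest_sv:
  fixes W :: "real ^ 'n ^ 'm"
  shows "smallest_sv (restrict_rows W (active_set ((1/2) *\<^sub>R (x0 + x1)) W)) * norm (x0 - x1) / 2
         \<le> norm (relu (W *v x0) - relu (W *v x1))"
  by (rule order_trans[OF divide_right_mono[OF smallest_sv_mult_norm_le]
        relu_diff_ge_midpoint_restriction]) simp

lemma finite_range_active_set_smallest_sv:
  "finite (range (\<lambda>x. smallest_sv (restrict_rows W (active_set x W))))"
  by (rule finite_subset[of _ "(\<lambda>I. smallest_sv (restrict_rows W I)) ` UNIV"]) auto

theorem theorem3:
  fixes W :: "real ^ 'n ^ 'm"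
  assumes "\<forall>x. directed_spanning W x"
  shows "let C = (1 / sqrt (2 * real CARD('m))) *
                 Min (range (\<lambda>x. smallest_sv (restrict_rows W (active_set x W))))
         in C > 0 \<and>
            (\<forall>x0 x1. norm (relu (W *v x0) - relu (W *v x1)) \<ge> C * norm (x0 - x1))"
proof -
  define \<sigma> where "\<sigma> = Min (range (\<lambda>x. smallest_sv (restrict_rows W (active_set x W))))"
  have \<sigma>_le: "\<sigma> \<le> smallest_sv (restrict_rows W (active_set x W))" for x
    unfolding \<sigma>_def by (rule Min_le[OF finite_range_active_set_smallest_sv]) simp
  have "\<sigma> \<in> range (\<lambda>x. smallest_sv (restrict_rows W (active_set x W)))"
    unfolding \<sigma>_def using finite_range_active_set_smallest_sv by (intro Min_in) auto
  then have "\<sigma> > 0" using assms directed_spanning_smallest_sv_pos by auto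
  have "2 \<le> sqrt (2 * real CARD('m))"
    using directed_spanning_card_ge_2[OF assms] by (intro real_le_rsqrt) simp
  define C where "C = (1 / sqrt (2 * real CARD('m))) * \<sigma>"
  have "C > 0" using \<open>\<sigma> > 0\<close> \<open>2 \<le> sqrt _\<close> by (simp add: C_def)
  have "C \<le> \<sigma> / 2" using \<open>\<sigma> > 0\<close> \<open>2 \<le> sqrt _\<close> by (simp add: C_def field_simps)
  have "C * norm (x0 - x1) \<le> norm (relu (W *v x0) - relu (W *v x1))" for x0 x1
  proof -
    have "C * norm (x0 - x1) \<le> \<sigma> * norm (x0 - x1) / 2"
      using mult_right_mono[OF \<open>C \<le> \<sigma> / 2\<close> norm_ge_zero] by simp
    also have "\<dots> \<le> smallest_sv (restrict_rows W (active_set ((1/2) *\<^sub>R (x0 + x1)) W))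
                        * norm (x0 - x1) / 2"
      by (intro divide_right_mono mult_right_mono \<sigma>_le) simp_all
    also have "\<dots> \<le> norm (relu (W *v x0) - relu (W *v x1))"
      by (rule relu_diff_ge_smallest_sv)
    finally show ?thesis .
  qed
  with \<open>C > 0\<close> show ?thesis by (simp add: Let_def C_def \<sigma>_def)
qed

end
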